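(* Assume Hypothesis 1 (stated in the context). If $\dfrac{|C|}{|C_{\max}|}<\dfrac{m(m-1)}{\delta(\delta-1)}$, then $\delta_{\max}\le 2\delta$.
   Context: $H(m,2)$: vertex set $\mathbb F_2^m$, coordinates indexed by a set $M$, $|M|=m$; $d$ Hamming distance. For a code $C$: minimum distance $\delta$, covering radius $\rho=\max_\alpha d(\alpha,C)$, $C_i=\{\alpha:d(\alpha,C)=i\}$. $\mathrm{Aut}(H(m,2))=B\rtimes L$, $B\cong\mathbb Z_2^m$ translations, $L\cong\mathrm{Sym}(M)$; $\mathrm{Aut}(C)$ is the setwise stabiliser of $C$. $C$ is completely transitive if $\mathrm{Aut}(C)$ is transitive on each of $C,C_1,\dots,C_\rho$. For a linear code $D$, $T_D$ is the group of translations by elements of $D$. For $C\ni\mathbf 0$, the maximal linear subcode $C_{\max}$ is the largest linear subcode $D\subseteq C$ with $T_D\le\mathrm{Aut}(C)$. Hypothesis 1: $C$ is a completely transitive code in $H(m,2)$ with $\mathbf 0\in C$ and minimum distance $\delta\ge5$; $X=\mathrm{Aut}(C)$; $C_{\max}$ is the maximal linear subcode with minimum distance $\delta_{\max}$; $X_{\max}$ is the setwise stabiliser of $C_{\max}$ in $X$; $2\le\dim C_{\max}\le m-2$. *)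

theory Defs
  imports Complex_Main "HOL-Combinatorics.Permutations"
begin

text \<open>The Hamming graph H(m,2): vertices are the elements of F_2^M, represented
  by their supports, i.e. subsets of the finite coordinate set M (m = card M).
  Vector addition is symmetric difference.\<close>

definition vadd :: "'a set \<Rightarrow> 'a set \<Rightarrow> 'a set" where
  "vadd x y = (x - y) \<union> (y - x)"

definition hdist :: "'a set \<Rightarrow> 'a set \<Rightarrow> nat" where
  "hdist x y = card (vadd x y)"

definition vertices :: "'a set \<Rightarrow> 'a set set" where
  "vertices M = Pow M"

definition dist_code :: "'a set set \<Rightarrow> 'a set \<Rightarrow> nat" where
  "dist_code C \<alpha> = Min ((\<lambda>c. hdist \<alpha> c) ` C)"

definition min_distance :: "'a set set \<Rightarrow> nat" where
  "min_distance C = Min {hdist x y | x y. x \<in> C \<and> y \<in> C \<and> x \<noteq> y}"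

definition covering_radius :: "'a set \<Rightarrow> 'a set set \<Rightarrow> nat" where
  "covering_radius M C = Max (dist_code C ` vertices M)"

definition code_layer :: "'a set \<Rightarrow> 'a set set \<Rightarrow> nat \<Rightarrow> 'a set set" where
  "code_layer M C i = {\<alpha> \<in> vertices M. dist_code C \<alpha> = i}"

text \<open>Aut(H(m,2)) = B \<rtimes> L: maps x \<mapsto> \<pi>(x) + b.\<close>
definition hamming_aut :: "'a set \<Rightarrow> ('a set \<Rightarrow> 'a set) set" where
  "hamming_aut M = {g. \<exists>\<pi> b. \<pi> permutes M \<and> b \<subseteq> M \<and> (\<forall>x. g x = vadd (\<pi> ` x) b)}"

definition code_aut :: "'a set \<Rightarrow> 'a set set \<Rightarrow> ('a set \<Rightarrow> 'a set) set" where
  "code_aut M C = {g \<in> hamming_aut M. g ` C = C}"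

definition translation :: "'a set \<Rightarrow> 'a set \<Rightarrow> 'a set" where
  "translation d = (\<lambda>x. vadd x d)"

definition completely_transitive :: "'a set \<Rightarrow> 'a set set \<Rightarrow> bool" where
  "completely_transitive M C \<longleftrightarrow>
     (\<forall>i \<le> covering_radius M C. \<forall>\<alpha> \<in> code_layer M C i. \<forall>\<beta> \<in> code_layer M C i.
        \<exists>g \<in> code_aut M C. g \<alpha> = \<beta>)"

definition linear_code :: "'a set \<Rightarrow> 'a set set \<Rightarrow> bool" where
  "linear_code M D \<longleftrightarrow> D \<subseteq> vertices M \<and> {} \<in> D \<and> (\<forall>x\<in>D. \<forall>y\<in>D. vadd x y \<in> D)"

definition translation_subcode :: "'a set \<Rightarrow> 'a set set \<Rightarrow> 'a set set \<Rightarrow> bool" where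
  "translation_subcode M C D \<longleftrightarrow> linear_code M D \<and> D \<subseteq> C \<and>
     (\<forall>d \<in> D. translation d \<in> code_aut M C)"

definition is_max_linear_subcode :: "'a set \<Rightarrow> 'a set set \<Rightarrow> 'a set set \<Rightarrow> bool" where
  "is_max_linear_subcode M C D \<longleftrightarrow> translation_subcode M C D \<and>
     (\<forall>D'. translation_subcode M C D' \<longrightarrow> D' \<subseteq> D)"

definition code_dim :: "'a set set \<Rightarrow> nat" where
  "code_dim D = (THE k. card D = 2 ^ k)"

end

theory Submission
  imports Defs
begin

(* Since the minimum distance exceeds 4, every pair of coordinates lies at distance 2 from C,
   and an automorphism of C moving one such pair to another cannot translate, because the
   translating vector would be a codeword at distance 2 from a pair.  Hence Aut(C) acts on
   pairs by coordinate permutations fixing C, and the words of minimum weight delta cover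
   all pairs of coordinates: there are at least m(m-1)/(delta(delta-1)) of them.  Each such
   word w gives a coset w + C_max inside C, so the hypothesis |C| / |C_max| < m(m-1)/(delta(delta-1))
   forces two distinct minimum weight words w1, w2 into the same coset; then w1 + w2 is a
   nonzero word of C_max of weight at most 2 delta. *)

lemma vadd_empty_right [simp]: "vadd x {} = x"
  and vadd_empty_left [simp]: "vadd {} x = x"
  and vadd_self [simp]: "vadd x x = {}"
  by (auto simp: vadd_def)

lemma vadd_eq_empty_iff: "vadd x y = {} \<longleftrightarrow> x = y"
  by (auto simp: vadd_def)

lemma vadd_left_cancel: "vadd x (vadd x y) = y"
  by (auto simp: vadd_def)

lemma vadd_eq_vadd_iff: "vadd x d1 = vadd y d2 \<longleftrightarrow> vadd x y = vadd d1 d2"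
  unfolding vadd_def by (simp add: set_eq_iff) blast

lemma vadd_vadd_cancel_right: "vadd (vadd x z) (vadd y z) = vadd x y"
  by (auto simp: vadd_def)

lemma image_vadd: "inj f \<Longrightarrow> f ` vadd x y = vadd (f ` x) (f ` y)"
  unfolding vadd_def by (simp add: image_Un image_set_diff)

lemma inj_vadd: "inj (vadd x)"
  by (metis injI vadd_left_cancel)

lemma card_vadd_le: "finite x \<Longrightarrow> finite y \<Longrightarrow> card (vadd x y) \<le> card x + card y"
  unfolding vadd_def by (meson card_Un_le card_mono Diff_subset finite_Diff le_trans add_mono)

lemma hdist_empty_right [simp]: "hdist x {} = card x"
  and hdist_empty_left [simp]: "hdist {} x = card x"
  and hdist_self [simp]: "hdist x x = 0"
  by (simp_all add: hdist_def)

lemma hdist_triangle: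
  assumes "finite x" "finite y" "finite z"
  shows "hdist x z \<le> hdist x y + hdist y z"
proof -
  have "card (vadd x z) \<le> card (vadd x y \<union> vadd y z)"
    using assms by (intro card_mono) (auto simp: vadd_def)
  also have "\<dots> \<le> card (vadd x y) + card (vadd y z)"
    by (rule card_Un_le)
  finally show ?thesis
    by (simp add: hdist_def)
qed

lemma hamming_autE:
  assumes "g \<in> hamming_aut M"
  obtains \<pi> b where "\<pi> permutes M" "b \<subseteq> M" "\<And>x. g x = vadd (\<pi> ` x) b"
  using assms by (auto simp: hamming_aut_def)

lemma hamming_aut_hdist:
  assumes "g \<in> hamming_aut M"
  shows "hdist (g x) (g y) = hdist x y"
proof -
  obtain \<pi> b where "\<pi> permutes M" and g: "\<And>x. g x = vadd (\<pi> ` x) b"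
    using assms by (auto elim: hamming_autE)
  then have "inj \<pi>"
    by (simp add: permutes_inj)
  then show ?thesis
    by (simp add: g hdist_def vadd_vadd_cancel_right image_vadd[symmetric] card_image inj_on_subset)
qed

lemma finite_distance_set:
  assumes "finite C"
  shows "finite {hdist x y | x y. x \<in> C \<and> y \<in> C \<and> x \<noteq> y}"
proof (rule finite_subset)
  show "{hdist x y | x y. x \<in> C \<and> y \<in> C \<and> x \<noteq> y} \<subseteq> (\<lambda>(x, y). hdist x y) ` (C \<times> C)"
    by auto
  show "finite ((\<lambda>(x, y). hdist x y) ` (C \<times> C))"
    using assms by simp
qed

lemma min_distance_le_hdist:
  assumes "finite C" "x \<in> C" "y \<in> C" "x \<noteq> y"
  shows "min_distance C \<le> hdist x y"
  unfolding min_distance_def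
  by (rule Min_le[OF finite_distance_set[OF assms(1)]]) (use assms(2-4) in auto)

lemma min_distance_le_card:
  "finite C \<Longrightarrow> {} \<in> C \<Longrightarrow> c \<in> C \<Longrightarrow> c \<noteq> {} \<Longrightarrow> min_distance C \<le> card c"
  using min_distance_le_hdist[of C c "{}"] by simp

lemma min_distance_attained:
  assumes "finite C" "x \<in> C" "y \<in> C" "x \<noteq> y"
  obtains x' y' where "x' \<in> C" "y' \<in> C" "x' \<noteq> y'" "hdist x' y' = min_distance C"
proof -
  have "min_distance C \<in> {hdist x y | x y. x \<in> C \<and> y \<in> C \<and> x \<noteq> y}"
    unfolding min_distance_def
    by (rule Min_in[OF finite_distance_set[OF assms(1)]]) (use assms(2-4) in auto)
  then show ?thesis
    by (elim CollectE exE conjE) (metis that)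
qed

lemma dist_code_member: "finite C \<Longrightarrow> c \<in> C \<Longrightarrow> dist_code C c = 0"
  unfolding dist_code_def by (metis Min_le finite_imageI hdist_self image_eqI le_zero_eq)

lemma dist_code_eq_card:
  assumes "finite C" "{} \<in> C" "\<forall>c\<in>C. finite c" "finite p" "2 * card p \<le> min_distance C"
  shows "dist_code C p = card p"
  unfolding dist_code_def
proof (rule antisym)
  show "Min (hdist p ` C) \<le> card p"
    using assms(1,2) by (metis Min_le finite_imageI hdist_empty_right image_eqI)
  have "card p \<le> hdist p c" if "c \<in> C" for c
  proof (cases "c = {}")
    case False
    have "card c \<le> card p + hdist p c"
      using hdist_triangle[of "{}" p c] assms(3,4) that by simp
    then show ?thesis
      using min_distance_le_card[OF assms(1,2) that False] assms(5) by linarith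
  qed simp
  then show "card p \<le> Min (hdist p ` C)"
    using assms(1,2) by (subst Min_ge_iff) auto
qed

lemma completely_transitiveD:
  assumes "finite M" "completely_transitive M C"
    and "\<alpha> \<in> code_layer M C i" "\<beta> \<in> code_layer M C i"
  obtains g where "g \<in> code_aut M C" "g \<alpha> = \<beta>"
proof -
  have "i \<le> covering_radius M C"
    using assms(1,3) unfolding covering_radius_def code_layer_def vertices_def
    by (auto intro: Max_ge)
  then show ?thesis
    using assms(2-4) that unfolding completely_transitive_def by blast
qed

lemma code_aut_transitive_on_code:
  assumes "finite M" "C \<subseteq> vertices M" "completely_transitive M C" "x \<in> C" "y \<in> C"
  obtains g where "g \<in> code_aut M C" "g x = y"
proof -
  have "finite C"
    using assms(1,2) by (auto simp: vertices_def intro: finite_subset)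
  then have "x \<in> code_layer M C 0" "y \<in> code_layer M C 0"
    using assms(2,4,5) dist_code_member by (auto simp: code_layer_def)
  then show ?thesis
    using completely_transitiveD[OF assms(1,3)] that by blast
qed

lemma min_weight_codeword_exists:
  assumes "finite M" "C \<subseteq> vertices M" "{} \<in> C" "completely_transitive M C"
    and "c \<in> C" "c \<noteq> {}"
  obtains w where "w \<in> C" "card w = min_distance C"
proof -
  have "finite C"
    using assms(1,2) by (auto simp: vertices_def intro: finite_subset)
  then obtain x y where xy: "x \<in> C" "y \<in> C" "x \<noteq> y" "hdist x y = min_distance C"
    using assms(5,3,6) by (rule min_distance_attained)
  obtain g where g: "g \<in> code_aut M C" "g x = {}"
    using code_aut_transitive_on_code[OF assms(1,2,4) xy(1) assms(3)] .
  have "hdist (g x) (g y) = hdist x y"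
    using g(1) hamming_aut_hdist unfolding code_aut_def by blast
  moreover have "g y \<in> C"
    using g(1) xy(2) by (auto simp: code_aut_def)
  ultimately show ?thesis
    using that g(2) xy(4) by simp
qed

text \<open>The translation part of such an automorphism is the codeword it assigns to the zero word,
  which lies at distance card p from q and hence is zero.\<close>

lemma code_aut_moving_small_set_is_permutation:
  assumes "finite M" "C \<subseteq> vertices M" "{} \<in> C" "g \<in> code_aut M C"
    and "finite p" "finite q" "card p = card q" "2 * card q < min_distance C" "g p = q"
  obtains \<pi> where "\<pi> permutes M" "\<And>x. g x = \<pi> ` x"
proof -
  obtain \<pi> b where "\<pi> permutes M" and g: "\<And>x. g x = vadd (\<pi> ` x) b"
    using assms(4) by (auto simp: code_aut_def elim: hamming_autE)
  have "finite C" and fin: "\<forall>c\<in>C. finite c"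
    using assms(1,2) by (auto simp: vertices_def intro: finite_subset)
  have "b \<in> C"
    using assms(3,4) g[of "{}"] by (force simp: code_aut_def)
  have "hdist q b = card q"
    using hamming_aut_hdist[of g M p "{}"] assms(4,7,9) g[of "{}"] by (simp add: code_aut_def)
  have "b = {}"
  proof (rule ccontr)
    assume "b \<noteq> {}"
    have "card b \<le> card q + hdist q b"
      using hdist_triangle[of "{}" q b] assms(6) fin \<open>b \<in> C\<close> by simp
    then show False
      using min_distance_le_card[OF \<open>finite C\<close> assms(3) \<open>b \<in> C\<close> \<open>b \<noteq> {}\<close>]
        \<open>hdist q b = card q\<close> assms(8) by linarith
  qed
  then show ?thesis
    using that \<open>\<pi> permutes M\<close> g by simp
qed

lemma min_weight_codewords_cover:
  assumes "finite M" "C \<subseteq> vertices M" "{} \<in> C" "completely_transitive M C"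
    and "w0 \<in> C" "card w0 = min_distance C"
    and "p \<subseteq> M" "2 * card p < min_distance C"
  obtains w where "w \<in> C" "card w = min_distance C" "p \<subseteq> w"
proof -
  have "finite C" and fin: "\<forall>c\<in>C. finite c" and "w0 \<subseteq> M"
    using assms(1,2,5) by (auto simp: vertices_def intro: finite_subset)
  have "card p \<le> card w0"
    using assms(6,8) by linarith
  then obtain p0 where p0: "p0 \<subseteq> w0" "card p0 = card p"
    by (rule obtain_subset_with_card_n)
  have "finite p" "finite p0"
    using assms(1,7) p0(1) \<open>w0 \<subseteq> M\<close> by (auto intro: finite_subset)
  have "p0 \<in> code_layer M C (card p)" "p \<in> code_layer M C (card p)"
    using dist_code_eq_card[OF \<open>finite C\<close> assms(3) fin] \<open>finite p\<close> \<open>finite p0\<close>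
      p0 \<open>w0 \<subseteq> M\<close> assms(7,8) by (auto simp: code_layer_def vertices_def)
  then obtain g where g: "g \<in> code_aut M C" "g p0 = p"
    by (rule completely_transitiveD[OF assms(1,4)])
  obtain \<pi> where \<pi>: "\<pi> permutes M" "\<And>x. g x = \<pi> ` x"
    using code_aut_moving_small_set_is_permutation[OF assms(1-3) g(1)
        \<open>finite p0\<close> \<open>finite p\<close> p0(2) assms(8) g(2)] by blast
  have "\<pi> ` w0 \<in> C"
    using g(1) assms(5) \<pi>(2) by (auto simp: code_aut_def)
  moreover have "card (\<pi> ` w0) = min_distance C"
    using card_image[OF inj_on_subset[OF permutes_inj[OF \<pi>(1)] subset_UNIV]] assms(6) by simp
  moreover have "p \<subseteq> \<pi> ` w0"
    using g(2) \<pi>(2) p0(1) by auto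
  ultimately show ?thesis
    using that by blast
qed

lemma card_choose_le_card_cover:
  assumes "finite M" "finite W" "\<And>w. w \<in> W \<Longrightarrow> finite w \<and> card w = d"
    and "\<And>p. p \<subseteq> M \<Longrightarrow> card p = k \<Longrightarrow> \<exists>w\<in>W. p \<subseteq> w"
  shows "card M choose k \<le> card W * (d choose k)"
proof -
  have "card M choose k = card {p. p \<subseteq> M \<and> card p = k}"
    using assms(1) by (simp add: n_subsets)
  also have "\<dots> \<le> card (\<Union>w\<in>W. {p. p \<subseteq> w \<and> card p = k})"
    using assms by (intro card_mono) (auto simp: finite_subset)
  also have "\<dots> \<le> (\<Sum>w\<in>W. card {p. p \<subseteq> w \<and> card p = k})"
    using assms(2) by (rule card_UN_le)
  also have "\<dots> = card W * (d choose k)"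
    using assms(3) by (simp add: n_subsets)
  finally show ?thesis .
qed

lemma two_mult_choose_two: "2 * (n choose 2) = n * (n - 1)"
proof -
  have "even (n * (n - 1))"
    by (cases n) auto
  then show ?thesis
    by (simp add: choose_two)
qed

definition min_weight_words :: "'a set set \<Rightarrow> 'a set set" where
  "min_weight_words C = {w \<in> C. card w = min_distance C}"

lemma card_min_weight_words_lower_bound:
  assumes "finite M" "C \<subseteq> vertices M" "{} \<in> C" "completely_transitive M C"
    and "5 \<le> min_distance C" "c \<in> C" "c \<noteq> {}"
  shows "card M * (card M - 1)
           \<le> card (min_weight_words C) * (min_distance C * (min_distance C - 1))"
proof -
  have "finite C" and fin: "\<forall>c\<in>C. finite c"
    using assms(1,2) by (auto simp: vertices_def intro: finite_subset)
  obtain w0 where "w0 \<in> C" "card w0 = min_distance C"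
    using assms(6,7) by (rule min_weight_codeword_exists[OF assms(1-4)])
  have cover: "\<exists>w\<in>min_weight_words C. p \<subseteq> w" if "p \<subseteq> M" and "card p = 2" for p
  proof -
    have "2 * card p < min_distance C"
      using \<open>card p = 2\<close> assms(5) by simp
    then obtain w where "w \<in> C" "card w = min_distance C" "p \<subseteq> w"
      by (rule min_weight_codewords_cover[OF assms(1-4) \<open>w0 \<in> C\<close> \<open>card w0 = _\<close> \<open>p \<subseteq> M\<close>])
    then show ?thesis
      by (auto simp: min_weight_words_def)
  qed
  have "card M choose 2 \<le> card (min_weight_words C) * (min_distance C choose 2)"
  proof (rule card_choose_le_card_cover[OF assms(1)])
    show "finite (min_weight_words C)"
      using \<open>finite C\<close> by (simp add: min_weight_words_def)
    show "\<And>w. w \<in> min_weight_words C \<Longrightarrow> finite w \<and> card w = min_distance C"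
      using fin by (simp add: min_weight_words_def)
  qed (rule cover)
  then show ?thesis
    unfolding two_mult_choose_two[symmetric] by simp
qed

lemma translation_subcode_vadd_mem:
  "translation_subcode M C D \<Longrightarrow> c \<in> C \<Longrightarrow> d \<in> D \<Longrightarrow> vadd c d \<in> C"
  unfolding translation_subcode_def code_aut_def translation_def by blast

text \<open>Pigeonhole on the cosets w + D, w \<in> W: they all lie in C.\<close>

lemma coset_collision:
  assumes "finite M" "linear_code M D" "finite C" "W \<subseteq> C"
    and "\<And>c d. c \<in> C \<Longrightarrow> d \<in> D \<Longrightarrow> vadd c d \<in> C"
    and "card C < card W * card D"
  obtains w1 w2 where "w1 \<in> W" "w2 \<in> W" "w1 \<noteq> w2" "vadd w1 w2 \<in> D"
proof -
  have "\<exists>w1\<in>W. \<exists>w2\<in>W. w1 \<noteq> w2 \<and> vadd w1 w2 \<in> D"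
  proof (rule ccontr)
    assume no_collision: "\<not> ?thesis"
    have "finite D" "finite W"
      using assms(1-4) by (auto simp: linear_code_def vertices_def intro: finite_subset)
    have "vadd w1 ` D \<inter> vadd w2 ` D = {}" if "w1 \<in> W" "w2 \<in> W" "w1 \<noteq> w2" for w1 w2
    proof (rule ccontr)
      assume "vadd w1 ` D \<inter> vadd w2 ` D \<noteq> {}"
      then obtain d1 d2 where "d1 \<in> D" "d2 \<in> D" "vadd w1 d1 = vadd w2 d2"
        by blast
      then have "vadd w1 w2 \<in> D"
        using assms(2) unfolding linear_code_def by (metis vadd_eq_vadd_iff)
      then show False
        using no_collision that by blast
    qed
    then have "card (\<Union>w\<in>W. vadd w ` D) = (\<Sum>w\<in>W. card (vadd w ` D))"
      using \<open>finite D\<close> \<open>finite W\<close> by (intro card_UN_disjoint) auto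
    also have "\<dots> = card W * card D"
      by (simp add: card_image[OF inj_on_subset[OF inj_vadd subset_UNIV]])
    finally have "card W * card D = card (\<Union>w\<in>W. vadd w ` D)" ..
    also have "\<dots> \<le> card C"
      using assms(3-5) by (intro card_mono) auto
    finally show False
      using assms(6) by linarith
  qed
  then show ?thesis
    using that by blast
qed

lemma min_distance_translation_subcode_le:
  assumes "finite M" "C \<subseteq> vertices M" "translation_subcode M C D"
    and "card C < card (min_weight_words C) * card D"
  shows "min_distance D \<le> 2 * min_distance C"
proof -
  have "finite C" and fin: "\<forall>c\<in>C. finite c"
    using assms(1,2) by (auto simp: vertices_def intro: finite_subset)
  have lin: "linear_code M D" and "D \<subseteq> C"
    using assms(3) by (simp_all add: translation_subcode_def)
  have "min_weight_words C \<subseteq> C"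
    by (auto simp: min_weight_words_def)
  then obtain w1 w2 where w: "w1 \<in> min_weight_words C" "w2 \<in> min_weight_words C"
    and "w1 \<noteq> w2" "vadd w1 w2 \<in> D"
    using coset_collision[OF assms(1) lin \<open>finite C\<close>] translation_subcode_vadd_mem[OF assms(3)]
      assms(4) by blast
  have "finite D"
    using \<open>finite C\<close> \<open>D \<subseteq> C\<close> by (rule finite_subset[rotated])
  moreover have "{} \<in> D" and "vadd w1 w2 \<noteq> {}"
    using lin \<open>w1 \<noteq> w2\<close> by (simp_all add: linear_code_def vadd_eq_empty_iff)
  ultimately have "min_distance D \<le> card (vadd w1 w2)"
    using min_distance_le_card \<open>vadd w1 w2 \<in> D\<close> by blast
  also have "\<dots> \<le> 2 * min_distance C"
    using card_vadd_le[of w1 w2] w fin by (auto simp: min_weight_words_def)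
  finally show ?thesis .
qed

lemma less_mult_if_ratio_less:
  fixes a b c d w :: nat
  assumes "real a / real b < real c / real d" "c \<le> w * d" "0 < b" "0 < d"
  shows "a < w * b"
proof -
  have "real c / real d \<le> real w"
    using assms(2,4) by (simp add: pos_divide_le_eq flip: of_nat_mult)
  with assms(1) have "real a / real b < real w"
    by linarith
  then show ?thesis
    using assms(3) by (simp add: pos_divide_less_eq flip: of_nat_mult)
qed

lemma code_dim_singleton: "code_dim {x} = 0"
  unfolding code_dim_def by (rule the_equality) (auto simp: eq_commute[of "Suc 0"])

theorem lemma2p8:
  fixes M :: "'a set" and C Cmax :: "'a set set" and m :: nat
  assumes "finite M" and "card M = m"
    and "C \<subseteq> vertices M" and "{} \<in> C"
    and "completely_transitive M C"
    and "min_distance C \<ge> 5"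
    and "is_max_linear_subcode M C Cmax"
    and "2 \<le> code_dim Cmax" and "code_dim Cmax \<le> m - 2"
    and "real (card C) / real (card Cmax)
           < real (m * (m - 1)) / real (min_distance C * (min_distance C - 1))"
  shows "min_distance Cmax \<le> 2 * min_distance C"
proof -
  have sub: "translation_subcode M C Cmax"
    using assms(7) by (simp add: is_max_linear_subcode_def)
  then have "Cmax \<subseteq> C" and "{} \<in> Cmax"
    by (simp_all add: translation_subcode_def linear_code_def)
  moreover have "Cmax \<noteq> {{}}"
    using assms(8) by (auto simp: code_dim_singleton)
  ultimately obtain c where "c \<in> C" "c \<noteq> {}"
    by blast
  have "finite Cmax"
    using assms(1,3) \<open>Cmax \<subseteq> C\<close> by (auto simp: vertices_def intro: finite_subset)
  have "m * (m - 1) \<le> card (min_weight_words C) * (min_distance C * (min_distance C - 1))"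
    using card_min_weight_words_lower_bound[OF assms(1,3-6) \<open>c \<in> C\<close> \<open>c \<noteq> {}\<close>] assms(2)
    by simp
  moreover have "0 < card Cmax"
    using \<open>finite Cmax\<close> \<open>{} \<in> Cmax\<close> by (auto simp: card_gt_0_iff)
  moreover have "0 < min_distance C * (min_distance C - 1)"
    using assms(6) by simp
  ultimately have "card C < card (min_weight_words C) * card Cmax"
    using assms(10) less_mult_if_ratio_less by blast
  then show ?thesis
    by (rule min_distance_translation_subcode_le[OF assms(1,3) sub])
qed

end
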